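(* Let $\varepsilon>0$, $m>0$, let $\mu,k$ be real functions on $\mathbb{R}^3$ and set $c_1=\frac{15}{m}\mu$, $c_2=\frac{9}{m^2}\big(k-\frac53\mu\big)$. Let $\boldsymbol\alpha(\mathbf{x},\mathbf{y})=\frac{\mathbf{y}-\mathbf{x}}{|\mathbf{y}-\mathbf{x}|^2}\chi_{B_\varepsilon(\mathbf{x})}(\mathbf{y})$ on $\mathbb{R}^3\times\mathbb{R}^3$. For $\mathbf{u}:\mathbb{R}^3\to\mathbb{R}^3$ define $(\mathcal{G}^*_{\boldsymbol\alpha}\mathbf{u})(\mathbf{x},\mathbf{y})=-\big(\mathbf{u}(\mathbf{y})-\mathbf{u}(\mathbf{x})\big)\cdot\boldsymbol\alpha(\mathbf{x},\mathbf{y})$, $(\overline{\mathcal{G}^*_{\boldsymbol\alpha}}\mathbf{u})(\mathbf{x})=-\int_{\mathbb{R}^3}\big(\mathbf{u}(\mathbf{z})-\mathbf{u}(\mathbf{x})\big)\cdot\boldsymbol\alpha(\mathbf{x},\mathbf{z})\,d\mathbf{z}$, $(\mathcal{D}^*_{\boldsymbol\alpha}\mathbf{u})(\mathbf{x},\mathbf{y})=-\big(\mathbf{u}(\mathbf{y})-\mathbf{u}(\mathbf{x})\big)\otimes\boldsymbol\alpha(\mathbf{x},\mathbf{y})$; for a scalar function $\eta$ of two points define $(\mathcal{G}_{\boldsymbol\alpha}\eta)(\mathbf{x})=\int_{\mathbb{R}^3}\big(\eta(\mathbf{y},\mathbf{x})+\eta(\mathbf{x},\mathbf{y})\big)\boldsymbol\alpha(\mathbf{x},\mathbf{y})\,d\mathbf{y}$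 (a scalar function $f$ of one point being treated as $\eta(\mathbf{x},\mathbf{y})=f(\mathbf{x})$), and for a tensor function $\boldsymbol\Psi$ of two points $(\mathcal{D}_{\boldsymbol\alpha}\boldsymbol\Psi)(\mathbf{x})=\int_{\mathbb{R}^3}\big(\boldsymbol\Psi(\mathbf{y},\mathbf{x})+\boldsymbol\Psi(\mathbf{x},\mathbf{y})\big)\boldsymbol\alpha(\mathbf{x},\mathbf{y})\,d\mathbf{y}$. Let $w(r)=1/r^2$ and let $\mathcal{L}$ be $(\mathcal{L}\mathbf{u})(\mathbf{x})=\int_{B_\varepsilon(\mathbf{x})}\big(c_1(\mathbf{x})+c_1(\mathbf{y})\big)w(|\mathbf{y}-\mathbf{x}|)\frac{(\mathbf{y}-\mathbf{x})\otimes(\mathbf{y}-\mathbf{x})}{|\mathbf{y}-\mathbf{x}|^2}\big(\mathbf{u}(\mathbf{y})-\mathbf{u}(\mathbf{x})\big)d\mathbf{y}+\int_{B_\varepsilon(\mathbf{x})}\int_{B_\varepsilon(\mathbf{x})}c_2(\mathbf{x})w(|\mathbf{y}-\mathbf{x}|)w(|\mathbf{z}-\mathbf{x}|)\big((\mathbf{y}-\mathbf{x})\otimes(\mathbf{z}-\mathbf{x})\big)\big(\mathbf{u}(\mathbf{z})-\mathbf{u}(\mathbf{x})\big)d\mathbf{z}d\mathbf{y}+\int_{B_\varepsilon(\mathbf{x})}\int_{B_\varepsilon(\mathbf{y})}c_2(\mathbf{y})w(|\mathbf{y}-\mathbf{x}|)w(|\mathbf{z}-\mathbf{y}|)\big((\mathbf{y}-\mathbf{x})\otimes(\mathbf{z}-\mathbf{y})\big)\big(\mathbf{u}(\mathbf{z})-\mathbf{u}(\mathbf{y})\big)d\mathbf{z}d\mathbf{y}$.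 Then, with $(c_1\mathcal{G}^*_{\boldsymbol\alpha}\mathbf{u})(\mathbf{x},\mathbf{y})=c_1(\mathbf{x})(\mathcal{G}^*_{\boldsymbol\alpha}\mathbf{u})(\mathbf{x},\mathbf{y})$ and $(c_1(\mathcal{D}^*_{\boldsymbol\alpha}\mathbf{u})^T)(\mathbf{x},\mathbf{y})=c_1(\mathbf{x})(\mathcal{D}^*_{\boldsymbol\alpha}\mathbf{u})(\mathbf{x},\mathbf{y})^T$, $-\mathcal{L}\mathbf{u}=\mathcal{G}_{\boldsymbol\alpha}(c_1\mathcal{G}^*_{\boldsymbol\alpha}\mathbf{u})+\mathcal{G}_{\boldsymbol\alpha}(c_2\overline{\mathcal{G}^*_{\boldsymbol\alpha}}\mathbf{u})$, and equivalently $-\mathcal{L}\mathbf{u}=\mathcal{D}_{\boldsymbol\alpha}\big(c_1(\mathcal{D}^*_{\boldsymbol\alpha}\mathbf{u})^T\big)+\mathcal{G}_{\boldsymbol\alpha}(c_2\overline{\mathcal{G}^*_{\boldsymbol\alpha}}\mathbf{u})$.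
   Context: $B_\varepsilon(\mathbf{x})$ is the open ball of radius $\varepsilon$ about $\mathbf{x}$ and $\chi_A$ the indicator of $A$; $(\mathbf{a}\otimes\mathbf{b})\mathbf{c}=\mathbf{a}(\mathbf{b}\cdot\mathbf{c})$. $\mathcal{L}$ is the linearized state-based peridynamics operator for an isotropic heterogeneous solid with bulk modulus $k$ and shear modulus $\mu$. All integrals are assumed to converge. *)

theory Defs
  imports "HOL-Analysis.Analysis"
begin

definition outer :: "real^'n \<Rightarrow> real^'m \<Rightarrow> real^'m^'n" where
  "outer a b = (\<chi> i j. a $ i * b $ j)"

definition alpha :: "real \<Rightarrow> real^3 \<Rightarrow> real^3 \<Rightarrow> real^3" where
  "alpha \<epsilon> x y = indicator (ball x \<epsilon>) y *\<^sub>R ((1 / (norm (y - x))\<^sup>2) *\<^sub>R (y - x))"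

definition Gstar :: "real \<Rightarrow> (real^3 \<Rightarrow> real^3) \<Rightarrow> real^3 \<Rightarrow> real^3 \<Rightarrow> real" where
  "Gstar \<epsilon> u x y = - ((u y - u x) \<bullet> alpha \<epsilon> x y)"

definition Gstar_bar :: "real \<Rightarrow> (real^3 \<Rightarrow> real^3) \<Rightarrow> real^3 \<Rightarrow> real" where
  "Gstar_bar \<epsilon> u x = - (\<integral>z. (u z - u x) \<bullet> alpha \<epsilon> x z \<partial>lebesgue)"

definition Dstar :: "real \<Rightarrow> (real^3 \<Rightarrow> real^3) \<Rightarrow> real^3 \<Rightarrow> real^3 \<Rightarrow> real^3^3" where
  "Dstar \<epsilon> u x y = - outer (u y - u x) (alpha \<epsilon> x y)"

definition Galpha :: "real \<Rightarrow> (real^3 \<Rightarrow> real^3 \<Rightarrow> real) \<Rightarrow> real^3 \<Rightarrow> real^3" where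
  "Galpha \<epsilon> \<eta> x = (\<integral>y. (\<eta> y x + \<eta> x y) *\<^sub>R alpha \<epsilon> x y \<partial>lebesgue)"

definition Dalpha :: "real \<Rightarrow> (real^3 \<Rightarrow> real^3 \<Rightarrow> real^3^3) \<Rightarrow> real^3 \<Rightarrow> real^3" where
  "Dalpha \<epsilon> \<Psi> x = (\<integral>y. (\<Psi> y x + \<Psi> x y) *v alpha \<epsilon> x y \<partial>lebesgue)"

definition wfun :: "real \<Rightarrow> real" where
  "wfun r = 1 / r\<^sup>2"

definition coef1 :: "real \<Rightarrow> (real^3 \<Rightarrow> real) \<Rightarrow> real^3 \<Rightarrow> real" where
  "coef1 m \<mu> x = (15 / m) * \<mu> x"

definition coef2 :: "real \<Rightarrow> (real^3 \<Rightarrow> real) \<Rightarrow> (real^3 \<Rightarrow> real) \<Rightarrow> real^3 \<Rightarrow> real" where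
  "coef2 m k \<mu> x = (9 / m\<^sup>2) * (k x - (5/3) * \<mu> x)"

definition L1_int :: "real \<Rightarrow> (real^3 \<Rightarrow> real) \<Rightarrow> (real^3 \<Rightarrow> real^3) \<Rightarrow> real^3 \<Rightarrow> real^3 \<Rightarrow> real^3" where
  "L1_int \<epsilon> c1 u x y = ((c1 x + c1 y) * wfun (norm (y - x))) *\<^sub>R
      (((1 / (norm (y - x))\<^sup>2) *\<^sub>R outer (y - x) (y - x)) *v (u y - u x))"

definition L2_int :: "(real^3 \<Rightarrow> real) \<Rightarrow> (real^3 \<Rightarrow> real^3) \<Rightarrow> real^3 \<Rightarrow> real^3 \<Rightarrow> real^3 \<Rightarrow> real^3" where
  "L2_int c2 u x y z = (c2 x * wfun (norm (y - x)) * wfun (norm (z - x))) *\<^sub>R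
      (outer (y - x) (z - x) *v (u z - u x))"

definition L3_int :: "(real^3 \<Rightarrow> real) \<Rightarrow> (real^3 \<Rightarrow> real^3) \<Rightarrow> real^3 \<Rightarrow> real^3 \<Rightarrow> real^3 \<Rightarrow> real^3" where
  "L3_int c2 u x y z = (c2 y * wfun (norm (y - x)) * wfun (norm (z - y))) *\<^sub>R
      (outer (y - x) (z - y) *v (u z - u y))"

definition Lop :: "real \<Rightarrow> (real^3 \<Rightarrow> real) \<Rightarrow> (real^3 \<Rightarrow> real) \<Rightarrow> (real^3 \<Rightarrow> real^3) \<Rightarrow> real^3 \<Rightarrow> real^3" where
  "Lop \<epsilon> c1 c2 u x =
     set_lebesgue_integral lebesgue (ball x \<epsilon>) (\<lambda>y. L1_int \<epsilon> c1 u x y)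
   + set_lebesgue_integral lebesgue (ball x \<epsilon>)
       (\<lambda>y. set_lebesgue_integral lebesgue (ball x \<epsilon>) (\<lambda>z. L2_int c2 u x y z))
   + set_lebesgue_integral lebesgue (ball x \<epsilon>)
       (\<lambda>y. set_lebesgue_integral lebesgue (ball y \<epsilon>) (\<lambda>z. L3_int c2 u x y z))"

end

theory Submission
  imports Defs
begin

text \<open>Since \<open>alpha(y,x) = -alpha(x,y)\<close>, the two-point function \<open>Gstar u\<close> is symmetric and
  \<open>Dstar u(x,y)\<^sup>T v = -((u y - u x) \<bullet> v) alpha(x,y)\<close>; so the integrands of the \<open>c\<^sub>1\<close>-terms
  of both right-hand sides coincide pointwise with minus the integrand of the first term of \<open>L u\<close>.
  In the double integrals of \<open>L u\<close> the tensor \<open>(y - x) \<otimes> (z - p)\<close> separates the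
  variables, so the inner integral over \<open>z\<close> is \<open>-Gstar_bar u(p)\<close> times a multiple of
  \<open>y - x\<close>; the base points \<open>p = x\<close> and \<open>p = y\<close> give the two halves of the \<open>c\<^sub>2\<close>-term.
  The specific form of the coefficients \<open>c\<^sub>1, c\<^sub>2\<close> is never used, and of the integrability
  hypotheses only those needed to split the integral of a sum are.\<close>

lemma outer_mult_vec: "outer a b *v c = (b \<bullet> c) *\<^sub>R a"
  by (simp add: vec_eq_iff outer_def matrix_vector_mult_def inner_vec_def
      sum_distrib_left mult.commute mult.left_commute)

lemma transpose_outer: "transpose (outer a b) = outer b a"
  by (simp add: vec_eq_iff outer_def transpose_def)

lemma outer_minus_left: "outer (- a) b = - outer a b"
  by (simp add: vec_eq_iff outer_def)

lemma alpha_eq_wfun: "alpha e x y = (indicator (ball x e) y * wfun (norm (y - x))) *\<^sub>R (y - x)"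
  by (simp add: alpha_def wfun_def)

lemma alpha_commute: "alpha e y x = - alpha e x y"
proof -
  have "indicator (ball y e) x = (indicator (ball x e) y :: real)"
    by (simp add: indicator_def dist_commute)
  moreover have "norm (x - y) = norm (y - x)"
    by (rule norm_minus_commute)
  ultimately show ?thesis
    by (simp add: alpha_eq_wfun) (metis minus_diff_eq scaleR_right.minus)
qed

lemma Gstar_commute: "Gstar e u y x = Gstar e u x y"
  by (simp add: Gstar_def alpha_commute[of e y x] inner_diff_left)

lemma transpose_Dstar_mult_vec:
  "transpose (Dstar e u a b) *v v = - ((u b - u a) \<bullet> v) *\<^sub>R alpha e a b"
  unfolding Dstar_def outer_minus_left[symmetric] transpose_outer outer_mult_vec
  by (simp add: inner_diff_left algebra_simps)

lemma Dstar_integrand_eq_Gstar_integrand: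
  "(c y *\<^sub>R transpose (Dstar e u y x) + c x *\<^sub>R transpose (Dstar e u x y)) *v alpha e x y
   = (c y * Gstar e u y x + c x * Gstar e u x y) *\<^sub>R alpha e x y"
  unfolding matrix_vector_mult_add_rdistrib scaleR_matrix_vector_assoc[symmetric]
    transpose_Dstar_mult_vec
  by (simp add: Gstar_def alpha_commute[of e y x] scaleR_diff_left)

lemma L1_int_eq_Gstar_integrand:
  "indicator (ball x e) y *\<^sub>R L1_int e c u x y
   = - ((c y * Gstar e u y x + c x * Gstar e u x y) *\<^sub>R alpha e x y)"
proof (cases "y \<in> ball x e")
  case True
  define r where "r = y - x"
  define n where "n = norm r"
  define d where "d = u y - u x"
  have alpha: "alpha e x y = (1 / n\<^sup>2) *\<^sub>R r"
    using True by (simp add: alpha_def r_def n_def)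
  have "indicator (ball x e) y *\<^sub>R L1_int e c u x y
      = ((c x + c y) * (d \<bullet> r) / n ^ 4) *\<^sub>R r"
    using True by (simp add: L1_int_def wfun_def outer_mult_vec inner_commute power4_eq_xxxx
        power2_eq_square flip: scaleR_matrix_vector_assoc r_def n_def d_def)
  also have "\<dots> = - (((c x + c y) * Gstar e u x y) *\<^sub>R alpha e x y)"
    by (simp add: Gstar_def alpha power4_eq_xxxx power2_eq_square flip: d_def)
  finally show ?thesis
    by (simp add: Gstar_commute[of e u y x] algebra_simps)
next
  case False
  then show ?thesis
    by (simp add: alpha_def)
qed

lemma indicator_scaleR_outer_wfun_eq_alpha:
  "indicator (ball p e) z *\<^sub>R ((c * wfun (norm (z - p))) *\<^sub>R (outer v (z - p) *v (u z - u p)))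
   = ((u z - u p) \<bullet> alpha e p z) *\<^sub>R (c *\<^sub>R v)"
  by (cases "z \<in> ball p e") (simp_all add: alpha_eq_wfun outer_mult_vec inner_commute)

lemma set_integral_outer_wfun_eq_Gstar_bar:
  assumes "integrable lebesgue (\<lambda>z. (u z - u p) \<bullet> alpha e p z)"
  shows "(LINT z:ball p e|lebesgue. (c * wfun (norm (z - p))) *\<^sub>R (outer v (z - p) *v (u z - u p)))
     = - (c * Gstar_bar e u p) *\<^sub>R v"
  unfolding set_lebesgue_integral_def indicator_scaleR_outer_wfun_eq_alpha
  using assms by (simp add: Gstar_bar_def)

lemma Dalpha_eq_Galpha_Gstar:
  "Dalpha e (\<lambda>a b. c a *\<^sub>R transpose (Dstar e u a b)) x = Galpha e (\<lambda>a b. c a * Gstar e u a b) x"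
  by (simp add: Dalpha_def Galpha_def Dstar_integrand_eq_Gstar_integrand)

lemma Galpha_Gstar_eq_L1:
  "Galpha e (\<lambda>a b. c a * Gstar e u a b) x = - (LINT y:ball x e|lebesgue. L1_int e c u x y)"
  by (simp add: Galpha_def set_lebesgue_integral_def L1_int_eq_Gstar_integrand)

lemma Galpha_Gstar_bar_eq_L2_L3:
  assumes int_Gbar: "\<And>x. integrable lebesgue (\<lambda>z. (u z - u x) \<bullet> alpha e x z)"
    and int_L2: "set_integrable lebesgue (ball x e)
        (\<lambda>y. LINT z:ball x e|lebesgue. L2_int c u x y z)"
    and int_L3: "set_integrable lebesgue (ball x e)
        (\<lambda>y. LINT z:ball y e|lebesgue. L3_int c u x y z)"
  shows "Galpha e (\<lambda>a b. c a * Gstar_bar e u a) x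
     = - ((LINT y:ball x e|lebesgue. LINT z:ball x e|lebesgue. L2_int c u x y z)
        + (LINT y:ball x e|lebesgue. LINT z:ball y e|lebesgue. L3_int c u x y z))"
proof -
  have L2: "(LINT z:ball x e|lebesgue. L2_int c u x y z)
      = - (c x * Gstar_bar e u x * wfun (norm (y - x))) *\<^sub>R (y - x)" for y
    using set_integral_outer_wfun_eq_Gstar_bar[OF int_Gbar, of x "c x * wfun (norm (y - x))" "y - x"]
    by (simp add: L2_int_def mult.commute mult.left_commute)
  have L3: "(LINT z:ball y e|lebesgue. L3_int c u x y z)
      = - (c y * Gstar_bar e u y * wfun (norm (y - x))) *\<^sub>R (y - x)" for y
    using set_integral_outer_wfun_eq_Gstar_bar[OF int_Gbar, of y "c y * wfun (norm (y - x))" "y - x"]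
    by (simp add: L3_int_def mult.commute mult.left_commute)
  have "(c y * Gstar_bar e u y + c x * Gstar_bar e u x) *\<^sub>R alpha e x y
      = - (indicator (ball x e) y *\<^sub>R (LINT z:ball x e|lebesgue. L2_int c u x y z)
         + indicator (ball x e) y *\<^sub>R (LINT z:ball y e|lebesgue. L3_int c u x y z))" for y
    by (simp add: L2 L3 alpha_eq_wfun algebra_simps)
  then show ?thesis
    using int_L2 int_L3
    by (simp add: Galpha_def set_lebesgue_integral_def set_integrable_def)
qed

theorem theorem4p2:
  fixes \<epsilon> m :: real and \<mu> k :: "real^3 \<Rightarrow> real" and u :: "real^3 \<Rightarrow> real^3"
    and c1 c2 :: "real^3 \<Rightarrow> real"
  assumes "\<epsilon> > 0" and "m > 0"
    and c1_def: "c1 = coef1 m \<mu>" and c2_def: "c2 = coef2 m k \<mu>"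
    \<comment> \<open>all integrals occurring in the statement converge\<close>
    and int_Gbar: "\<And>x. integrable lebesgue (\<lambda>z. (u z - u x) \<bullet> alpha \<epsilon> x z)"
    and int_G1: "\<And>x. integrable lebesgue
        (\<lambda>y. (c1 y * Gstar \<epsilon> u y x + c1 x * Gstar \<epsilon> u x y) *\<^sub>R alpha \<epsilon> x y)"
    and int_G2: "\<And>x. integrable lebesgue
        (\<lambda>y. (c2 y * Gstar_bar \<epsilon> u y + c2 x * Gstar_bar \<epsilon> u x) *\<^sub>R alpha \<epsilon> x y)"
    and int_D: "\<And>x. integrable lebesgue
        (\<lambda>y. (c1 y *\<^sub>R transpose (Dstar \<epsilon> u y x) + c1 x *\<^sub>R transpose (Dstar \<epsilon> u x y))
               *v alpha \<epsilon> x y)"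
    and int_L1: "\<And>x. set_integrable lebesgue (ball x \<epsilon>) (\<lambda>y. L1_int \<epsilon> c1 u x y)"
    and int_L2_in: "\<And>x y. set_integrable lebesgue (ball x \<epsilon>) (\<lambda>z. L2_int c2 u x y z)"
    and int_L2_out: "\<And>x. set_integrable lebesgue (ball x \<epsilon>)
        (\<lambda>y. set_lebesgue_integral lebesgue (ball x \<epsilon>) (\<lambda>z. L2_int c2 u x y z))"
    and int_L3_in: "\<And>x y. set_integrable lebesgue (ball y \<epsilon>) (\<lambda>z. L3_int c2 u x y z)"
    and int_L3_out: "\<And>x. set_integrable lebesgue (ball x \<epsilon>)
        (\<lambda>y. set_lebesgue_integral lebesgue (ball y \<epsilon>) (\<lambda>z. L3_int c2 u x y z))"
  shows "- Lop \<epsilon> c1 c2 u x =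
           Galpha \<epsilon> (\<lambda>a b. c1 a * Gstar \<epsilon> u a b) x
         + Galpha \<epsilon> (\<lambda>a b. c2 a * Gstar_bar \<epsilon> u a) x
     \<and> - Lop \<epsilon> c1 c2 u x =
           Dalpha \<epsilon> (\<lambda>a b. c1 a *\<^sub>R transpose (Dstar \<epsilon> u a b)) x
         + Galpha \<epsilon> (\<lambda>a b. c2 a * Gstar_bar \<epsilon> u a) x"
proof -
  have "- Lop \<epsilon> c1 c2 u x =
      Galpha \<epsilon> (\<lambda>a b. c1 a * Gstar \<epsilon> u a b) x + Galpha \<epsilon> (\<lambda>a b. c2 a * Gstar_bar \<epsilon> u a) x"
    unfolding Lop_def Galpha_Gstar_eq_L1
      Galpha_Gstar_bar_eq_L2_L3[OF int_Gbar int_L2_out int_L3_out]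
    by (simp add: algebra_simps)
  then show ?thesis
    by (simp add: Dalpha_eq_Galpha_Gstar)
qed

end
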